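(* Consider the system $\dot X=(1-Y)X$, $\dot Y=(X-U)Y$ on $\{X>0,Y>0\}$ with arbitrary input $U$, and let $V(X,Y)=\Psi(1/X)+\Psi(Y/X)$. Then along solutions $\dot V=L(X,Y)+G(X,Y)U$ with $$L(X,Y)=\frac{-(X-1)^2+Y(Y-X)}{X},\qquad G(X,Y)=\frac{X-Y}{X},$$ and for every $(X,Y)$ with $X>0$, $Y>0$, $(X,Y)\neq(1,1)$, there exists $U>0$ such that $L(X,Y)+G(X,Y)U<0$. In particular, whenever $G(X,Y)\ge 0$ and $(X,Y)\ne(1,1)$, one has $L(X,Y)<0$. Thus $V$ is a global control Lyapunov function on $\{X>0,Y>0\}$ with inputs restricted to $U>0$.
   Context: $\Psi(S)=S-1-\ln S$ for $S>0$. *)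

theory Defs
  imports "HOL-Analysis.Analysis"
begin

definition Psi :: "real \<Rightarrow> real" where
  "Psi S = S - 1 - ln S"

definition Vf :: "real \<Rightarrow> real \<Rightarrow> real" where
  "Vf x y = Psi (1 / x) + Psi (y / x)"

definition Lf :: "real \<Rightarrow> real \<Rightarrow> real" where
  "Lf x y = (- ((x - 1)^2) + y * (y - x)) / x"

definition Gf :: "real \<Rightarrow> real \<Rightarrow> real" where
  "Gf x y = (x - y) / x"

text \<open>Global control Lyapunov function for a control-affine scalar-input system
  on the open domain D with equilibrium e and admissible inputs A, where the
  derivative of V along solutions is L z + G z * u: V is continuous on D,
  positive definite with respect to e, proper on D (compact sublevel sets),
  and at every state z \<noteq> e some admissible input makes the derivative negative.\<close>
definition global_clf ::
  "((real \<times> real) \<Rightarrow> real) \<Rightarrow> ((real \<times> real) \<Rightarrow> real) \<Rightarrow> ((real \<times> real) \<Rightarrow> real)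
    \<Rightarrow> (real \<times> real) set \<Rightarrow> (real \<times> real) \<Rightarrow> real set \<Rightarrow> bool" where
  "global_clf V L G D e A \<longleftrightarrow>
     e \<in> D \<and> continuous_on D V \<and> V e = 0 \<and> (\<forall>z\<in>D. z \<noteq> e \<longrightarrow> V z > 0) \<and>
     (\<forall>c. compact {z \<in> D. V z \<le> c}) \<and>
     (\<forall>z\<in>D. z \<noteq> e \<longrightarrow> (\<exists>u\<in>A. L z + G z * u < 0))"

end

theory Submission
  imports Defs
begin

text \<open>Since \<open>Psi \<ge> 0\<close> with equality only at 1, and \<open>Psi S \<le> c\<close> confines \<open>S\<close> to a compact
  subinterval of \<open>(0, \<infinity>)\<close>, \<open>V\<close> is positive definite and proper: a sublevel set pins down
  \<open>1/X\<close> and \<open>Y/X\<close>, hence \<open>(X, Y)\<close>, in a compact box. The chain rule gives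
  \<open>dV/dt = L + G U\<close>, and \<open>L = -(X - 1)\<^sup>2/X - Y G\<close>. Hence \<open>L < 0\<close> wherever \<open>G \<ge> 0\<close> away from
  the equilibrium, so a small input \<open>U > 0\<close> keeps \<open>L + G U < 0\<close>; where \<open>G < 0\<close>, a large
  input \<open>U\<close> does.\<close>

lemma Psi_nonneg: "S > 0 \<Longrightarrow> Psi S \<ge> 0"
  using ln_le_minus_one[of S] by (simp add: Psi_def)

lemma Psi_eq_0_iff: "S > 0 \<Longrightarrow> Psi S = 0 \<longleftrightarrow> S = 1"
  using ln_eq_minus_one[of S] by (auto simp: Psi_def)

lemma Psi_le_imp_ge: assumes "S > 0" "Psi S \<le> c" shows "exp (-1 - c) \<le> S"
proof -
  have "-1 - c \<le> ln S" using assms by (simp add: Psi_def)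
  then show ?thesis using assms by (metis exp_le_cancel_iff exp_ln)
qed

lemma Psi_le_imp_le: assumes "S > 0" "Psi S \<le> c" shows "S \<le> 2 * (c + 1)"
proof -
  have "ln S - ln 2 \<le> S / 2 - 1"
    using ln_le_minus_one[of "S / 2"] assms(1) by (simp add: ln_div)
  then have "ln S < S / 2" using ln_2_less_1 by linarith
  then show ?thesis using assms by (simp add: Psi_def)
qed

lemma Vf_pos:
  assumes "x > 0" "y > 0" "(x, y) \<noteq> (1, 1)"
  shows "Vf x y > 0"
proof (rule ccontr)
  assume "\<not> Vf x y > 0"
  moreover have "Psi (1 / x) \<ge> 0" "Psi (y / x) \<ge> 0" using assms by (simp_all add: Psi_nonneg)
  ultimately have "Psi (1 / x) = 0" "Psi (y / x) = 0" unfolding Vf_def by linarith+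
  with assms have "1 / x = 1" "y / x = 1" by (simp_all add: Psi_eq_0_iff)
  with assms show False by (simp add: field_simps)
qed

lemma Vf_le_imp_mem_box:
  assumes "x > 0" "y > 0" "Vf x y \<le> c"
  defines "m \<equiv> exp (-1 - c)" and "M \<equiv> 2 * (c + 1)"
  shows "(x, y) \<in> {1 / M .. 1 / m} \<times> {m / M .. M / m}"
proof -
  have "Psi (1 / x) \<le> c" "Psi (y / x) \<le> c"
    using assms(1-3) Psi_nonneg[of "1 / x"] Psi_nonneg[of "y / x"] by (auto simp: Vf_def)
  then have inv_x: "m \<le> 1 / x" "1 / x \<le> M" and ratio: "m \<le> y / x" "y / x \<le> M"
    using assms(1,2) Psi_le_imp_ge Psi_le_imp_le unfolding m_def M_def by simp_all
  have "m > 0" by (simp add: m_def)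
  with inv_x have "M > 0" by linarith
  have x: "1 / M \<le> x" "x \<le> 1 / m"
    using le_imp_inverse_le[OF inv_x(2)] le_imp_inverse_le[OF inv_x(1) \<open>m > 0\<close>] assms(1)
    by (simp_all add: inverse_eq_divide)
  have "m * x \<le> y" "y \<le> M * x" using ratio assms(1) by (simp_all add: field_simps)
  moreover have "m / M \<le> m * x" "M * x \<le> M / m"
    using x \<open>m > 0\<close> \<open>M > 0\<close> by (simp_all add: field_simps)
  ultimately show ?thesis using x by simp
qed

lemma compact_sublevel_if_in_compact:
  fixes f :: "'a::metric_space \<Rightarrow> real"
  assumes "continuous_on D f" "compact K" "K \<subseteq> D" "{z \<in> D. f z \<le> c} \<subseteq> K"
  shows "compact {z \<in> D. f z \<le> c}"
proof -
  have "closed (K \<inter> f -` {..c})"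
    using continuous_closed_preimage[OF continuous_on_subset[OF assms(1,3)]]
      compact_imp_closed[OF assms(2)] by simp
  with assms(2) have "compact (K \<inter> (K \<inter> f -` {..c}))" by (rule compact_Int_closed)
  moreover have "{z \<in> D. f z \<le> c} = K \<inter> f -` {..c}" using assms(3,4) by auto
  ultimately show ?thesis by (simp add: Int_assoc[symmetric])
qed

lemma continuous_on_Vf: "continuous_on {z. fst z > 0 \<and> snd z > 0} (\<lambda>(x, y). Vf x y)"
proof -
  have "continuous_on {z. fst z > 0 \<and> snd z > 0} (\<lambda>z. Vf (fst z) (snd z))"
    unfolding Vf_def Psi_def by (auto intro!: continuous_intros)
  then show ?thesis by (simp add: case_prod_beta')
qed

lemma compact_sublevel_Vf: "compact {z \<in> {z. fst z > 0 \<and> snd z > 0}. (\<lambda>(x, y). Vf x y) z \<le> c}"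
proof (rule compact_sublevel_if_in_compact[OF continuous_on_Vf])
  \<comment> \<open>For \<open>c < 0\<close> the sublevel set is empty; \<open>max c 0\<close> only keeps the box inside the domain.\<close>
  define c' where "c' = max c 0"
  define m where "m = exp (-1 - c')"
  define M where "M = 2 * (c' + 1)"
  let ?K = "{1 / M .. 1 / m} \<times> {m / M .. M / m}"
  show "compact ?K" by (intro compact_Times compact_Icc)
  have "1 / M > 0" "m / M > 0" by (simp_all add: m_def M_def c'_def)
  show "?K \<subseteq> {z. fst z > 0 \<and> snd z > 0}"
  proof
    fix z assume "z \<in> ?K"
    then have "1 / M \<le> fst z" "m / M \<le> snd z" by (auto simp: mem_Times_iff)
    with \<open>1 / M > 0\<close> \<open>m / M > 0\<close> have "fst z > 0" "snd z > 0" by linarith+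
    then show "z \<in> {z. fst z > 0 \<and> snd z > 0}" by simp
  qed
  show "{z \<in> {z. fst z > 0 \<and> snd z > 0}. (\<lambda>(x, y). Vf x y) z \<le> c} \<subseteq> ?K"
  proof
    fix z assume "z \<in> {z \<in> {z. fst z > 0 \<and> snd z > 0}. (\<lambda>(x, y). Vf x y) z \<le> c}"
    moreover have "c \<le> c'" by (simp add: c'_def)
    ultimately have "fst z > 0" "snd z > 0" "Vf (fst z) (snd z) \<le> c'"
      by (auto simp: case_prod_beta)
    from Vf_le_imp_mem_box[OF this] show "z \<in> ?K" by (simp add: m_def M_def)
  qed
qed

lemma Vf_has_derivative_along_system:
  fixes X Y U :: "real \<Rightarrow> real"
  assumes "X t > 0" "Y t > 0"
    and "(X has_real_derivative ((1 - Y t) * X t)) (at t)"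
    and "(Y has_real_derivative ((X t - U t) * Y t)) (at t)"
  shows "((\<lambda>s. Vf (X s) (Y s)) has_real_derivative
          (Lf (X t) (Y t) + Gf (X t) (Y t) * U t)) (at t)"
  unfolding Vf_def Psi_def using assms
  by (auto intro!: derivative_eq_intros simp: Lf_def Gf_def field_simps power2_eq_square)

lemma Lf_eq: "x > 0 \<Longrightarrow> Lf x y = - ((x - 1)\<^sup>2 / x) - y * Gf x y"
  by (simp add: Lf_def Gf_def field_simps)

lemma Lf_neg_if_Gf_nonneg:
  assumes "x > 0" "y > 0" "(x, y) \<noteq> (1, 1)" "Gf x y \<ge> 0"
  shows "Lf x y < 0"
proof (cases "x = 1")
  case True
  with assms have "Gf x y > 0" by (simp add: Gf_def)
  with assms True show ?thesis by (simp add: Lf_eq)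
next
  case False
  with assms have "(x - 1)\<^sup>2 / x > 0" by simp
  moreover have "y * Gf x y \<ge> 0" using assms by simp
  ultimately show ?thesis using Lf_eq[OF assms(1), of y] by linarith
qed

lemma exists_pos_affine_neg:
  fixes L G :: real
  assumes "L < 0 \<or> G < 0"
  shows "\<exists>u > 0. L + G * u < 0"
proof (cases "G < 0")
  case True
  have "L + G * ((\<bar>L\<bar> + 1) / - G) = L - \<bar>L\<bar> - 1" using True by (simp add: field_simps)
  then have "L + G * ((\<bar>L\<bar> + 1) / - G) < 0" by simp
  moreover have "(\<bar>L\<bar> + 1) / - G > 0" using True by (intro divide_pos_pos) simp_all
  ultimately show ?thesis by blast
next
  case False
  with assms have "L < 0" "G + 1 > 0" by simp_all
  then have "L + G * (- L / (G + 1)) = L / (G + 1)" by (simp add: field_simps)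
  also have "\<dots> < 0" using \<open>L < 0\<close> \<open>G + 1 > 0\<close> by (rule divide_neg_pos)
  finally have "L + G * (- L / (G + 1)) < 0" .
  moreover have "- L / (G + 1) > 0" using \<open>L < 0\<close> \<open>G + 1 > 0\<close> by (intro divide_pos_pos) simp_all
  ultimately show ?thesis by blast
qed

lemma exists_pos_input_decreasing:
  assumes "x > 0" "y > 0" "(x, y) \<noteq> (1, 1)"
  shows "\<exists>u > 0. Lf x y + Gf x y * u < 0"
  using assms Lf_neg_if_Gf_nonneg[of x y] by (intro exists_pos_affine_neg) linarith

theorem mainTheorem6:
  shows
   "(\<forall>(X :: real \<Rightarrow> real) (Y :: real \<Rightarrow> real) (U :: real \<Rightarrow> real) t.
       X t > 0 \<longrightarrow> Y t > 0 \<longrightarrow>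
       (X has_real_derivative ((1 - Y t) * X t)) (at t) \<longrightarrow>
       (Y has_real_derivative ((X t - U t) * Y t)) (at t) \<longrightarrow>
       ((\<lambda>s. Vf (X s) (Y s)) has_real_derivative
          (Lf (X t) (Y t) + Gf (X t) (Y t) * U t)) (at t))
    \<and> (\<forall>x y :: real. x > 0 \<longrightarrow> y > 0 \<longrightarrow> (x, y) \<noteq> (1, 1) \<longrightarrow>
         (\<exists>u > 0. Lf x y + Gf x y * u < 0))
    \<and> (\<forall>x y :: real. x > 0 \<longrightarrow> y > 0 \<longrightarrow> (x, y) \<noteq> (1, 1) \<longrightarrow> Gf x y \<ge> 0 \<longrightarrow>
         Lf x y < 0)
    \<and> global_clf (\<lambda>(x, y). Vf x y) (\<lambda>(x, y). Lf x y) (\<lambda>(x, y). Gf x y)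
         {z. fst z > 0 \<and> snd z > 0} (1, 1) {u. u > 0}"
proof (intro conjI allI impI)
  have "Vf 1 1 = 0" by (simp add: Vf_def Psi_def)
  then show "global_clf (\<lambda>(x, y). Vf x y) (\<lambda>(x, y). Lf x y) (\<lambda>(x, y). Gf x y)
          {z. fst z > 0 \<and> snd z > 0} (1, 1) {u. u > 0}"
    unfolding global_clf_def
    using continuous_on_Vf compact_sublevel_Vf Vf_pos exists_pos_input_decreasing
    by auto
qed (fact Vf_has_derivative_along_system exists_pos_input_decreasing Lf_neg_if_Gf_nonneg)+

end
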